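(* Let $\Bbbk$ be an algebraically closed field of characteristic zero and $n\ge 2$. Consider $A=\Bbbk[x]/(x^n)$ with the Frobenius structure determined by $\Delta(1)=\sum_{i=0}^{n-1}x^i\otimes x^{n-1-i}$ (so $\Delta(a)=(a\otimes1)\Delta(1)$) and counit $\varepsilon(x^{n-1})=1$, $\varepsilon(x^j)=0$ for $j<n-1$. Then: (a) if $n$ is even, $A$ admits no extended structure; (b) if $n$ is odd, the extended structures on $A$ are exactly $\phi=\mathrm{id}_A$ together with $\theta=\pm\sqrt n\,x^{(n-1)/2}+\sum_{j=(n+1)/2}^{n-1}\theta_jx^j$ for arbitrary $\theta_{(n+1)/2},\dots,\theta_{n-1}\in\Bbbk$.
   Context: A Frobenius algebra over $\Bbbk$ is a tuple $(A,m,u,\Delta,\varepsilon)$ where $(A,m,u)$ is an associative unital algebra and $(A,\Delta,\varepsilon)$ is a coassociative counital coalgebra satisfying $(a\otimes 1_A)\Delta(b)=\Delta(ab)=\Delta(a)(1_A\otimes b)$. A Frobenius algebra morphism is both an algebra and coalgebra morphism. An extended structure on $A$ is a pair $(\phi,\theta)$, $\phi:A\to A$ linear, $\theta\in A$, with: (i) $\phi$ a Frobenius algebra morphism with $\phi^2=\mathrm{id}_A$; (ii) $\phi(\theta a)=\theta a$ for all $a\in A$; (iii) $m(\phi\otimes\mathrm{id}_A)\Delta(1_A)=\theta^2$. *)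

theory Defs
  imports "HOL-Computational_Algebra.Polynomial"
begin

definition alg_closed :: "'a::field itself \<Rightarrow> bool" where
  "alg_closed _ = (\<forall>p::'a poly. degree p > 0 \<longrightarrow> (\<exists>x. poly p x = 0))"

text \<open>The algebra A = k[x]/(x^n): an element is its coefficient sequence
  (coefficient of x^i at position i), vanishing at positions >= n.\<close>
definition TA :: "nat \<Rightarrow> (nat \<Rightarrow> 'k::field) set" where
  "TA n = {a. \<forall>i\<ge>n. a i = 0}"

definition xpow :: "nat \<Rightarrow> nat \<Rightarrow> nat \<Rightarrow> 'k::field" where
  "xpow n k = (\<lambda>i. if i = k \<and> k < n then 1 else 0)"

definition tone :: "nat \<Rightarrow> nat \<Rightarrow> 'k::field" where
  "tone n = xpow n 0"

definition tadd :: "(nat \<Rightarrow> 'k::field) \<Rightarrow> (nat \<Rightarrow> 'k) \<Rightarrow> nat \<Rightarrow> 'k" where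
  "tadd a b = (\<lambda>i. a i + b i)"

definition tsmult :: "'k::field \<Rightarrow> (nat \<Rightarrow> 'k) \<Rightarrow> nat \<Rightarrow> 'k" where
  "tsmult c a = (\<lambda>i. c * a i)"

definition tmult :: "nat \<Rightarrow> (nat \<Rightarrow> 'k::field) \<Rightarrow> (nat \<Rightarrow> 'k) \<Rightarrow> nat \<Rightarrow> 'k" where
  "tmult n a b = (\<lambda>k. if k < n then (\<Sum>i\<le>k. a i * b (k - i)) else 0)"

text \<open>Tensors in A \<otimes> A: coefficient of x^p \<otimes> x^q at (p,q).\<close>
definition delta1 :: "nat \<Rightarrow> nat \<Rightarrow> nat \<Rightarrow> 'k::field" where
  "delta1 n = (\<lambda>p q. if p < n \<and> q < n \<and> p + q = n - 1 then 1 else 0)"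

text \<open>Left action (a \<otimes> 1) T.\<close>
definition lact :: "nat \<Rightarrow> (nat \<Rightarrow> 'k::field) \<Rightarrow> (nat \<Rightarrow> nat \<Rightarrow> 'k) \<Rightarrow> nat \<Rightarrow> nat \<Rightarrow> 'k" where
  "lact n a T = (\<lambda>p q. if p < n then (\<Sum>r\<le>p. a r * T (p - r) q) else 0)"

definition comult :: "nat \<Rightarrow> (nat \<Rightarrow> 'k::field) \<Rightarrow> nat \<Rightarrow> nat \<Rightarrow> 'k" where
  "comult n a = lact n a (delta1 n)"

definition counit :: "nat \<Rightarrow> (nat \<Rightarrow> 'k::field) \<Rightarrow> 'k" where
  "counit n a = a (n - 1)"

text \<open>f \<otimes> g applied to a tensor (for linear f, g), expanded on the monomial basis.\<close>
definition tensor_map :: "nat \<Rightarrow> ((nat \<Rightarrow> 'k::field) \<Rightarrow> nat \<Rightarrow> 'k) \<Rightarrow> ((nat \<Rightarrow> 'k) \<Rightarrow> nat \<Rightarrow> 'k)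
    \<Rightarrow> (nat \<Rightarrow> nat \<Rightarrow> 'k) \<Rightarrow> nat \<Rightarrow> nat \<Rightarrow> 'k" where
  "tensor_map n f g T = (\<lambda>p q. \<Sum>i<n. \<Sum>j<n. T i j * f (xpow n i) p * g (xpow n j) q)"

definition tensor_mult :: "nat \<Rightarrow> (nat \<Rightarrow> nat \<Rightarrow> 'k::field) \<Rightarrow> nat \<Rightarrow> 'k" where
  "tensor_mult n T = (\<lambda>k. \<Sum>i<n. \<Sum>j<n. T i j * tmult n (xpow n i) (xpow n j) k)"

definition is_linear_map :: "nat \<Rightarrow> ((nat \<Rightarrow> 'k::field) \<Rightarrow> nat \<Rightarrow> 'k) \<Rightarrow> bool" where
  "is_linear_map n f \<longleftrightarrow> (\<forall>a\<in>TA n. f a \<in> TA n)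
     \<and> (\<forall>a\<in>TA n. \<forall>b\<in>TA n. f (tadd a b) = tadd (f a) (f b))
     \<and> (\<forall>c. \<forall>a\<in>TA n. f (tsmult c a) = tsmult c (f a))"

definition frob_morphism :: "nat \<Rightarrow> ((nat \<Rightarrow> 'k::field) \<Rightarrow> nat \<Rightarrow> 'k) \<Rightarrow> bool" where
  "frob_morphism n f \<longleftrightarrow> is_linear_map n f
     \<and> f (tone n) = tone n
     \<and> (\<forall>a\<in>TA n. \<forall>b\<in>TA n. f (tmult n a b) = tmult n (f a) (f b))
     \<and> (\<forall>a\<in>TA n. comult n (f a) = tensor_map n f f (comult n a))
     \<and> (\<forall>a\<in>TA n. counit n (f a) = counit n a)"

definition extended_structure :: "nat \<Rightarrow> ((nat \<Rightarrow> 'k::field) \<Rightarrow> nat \<Rightarrow> 'k) \<Rightarrow> (nat \<Rightarrow> 'k) \<Rightarrow> bool" where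
  "extended_structure n \<phi> \<theta> \<longleftrightarrow> \<theta> \<in> TA n
     \<and> frob_morphism n \<phi>
     \<and> (\<forall>a\<in>TA n. \<phi> (\<phi> a) = a)
     \<and> (\<forall>a\<in>TA n. \<phi> (tmult n \<theta> a) = tmult n \<theta> a)
     \<and> tensor_mult n (tensor_map n \<phi> id (delta1 n)) = tmult n \<theta> \<theta>"

end

theory Submission
  imports Defs
begin

text \<open>A Frobenius morphism f of k[x]/(x^n) is determined by f(x) = c x + (higher terms), and
  f(x^i) = c^i x^i + (higher terms). Hence m(f \<otimes> id)\<Delta>(1) = (1 + c + ... + c^(n-1)) x^(n-1).
  Involutivity gives c^2 = 1 and the counit gives c^(n-1) = 1, so this sum is nonzero; then
  \<theta>^2 is a nonzero multiple of x^(n-1), which forces n odd and \<theta> of order (n-1)/2.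
  Comparing \<theta> f(x) = f(\<theta> x) = \<theta> x one degree above that order gives c = 1, so the sum is n,
  and an involution that is unipotent in the basis of monomials is the identity.\<close>

lemma sum_eq_single:
  assumes "finite A" and "\<And>x. x \<in> A \<Longrightarrow> x \<noteq> a \<Longrightarrow> g x = 0"
  shows "sum g A = (if a \<in> A then g a else 0)"
proof -
  have "sum g A = (\<Sum>x\<in>A. if x = a then g a else 0)"
    using assms(2) by (intro sum.cong) auto
  then show ?thesis
    using assms(1) by simp
qed

lemma xpow_in_TA [simp]: "xpow n k \<in> TA n"
  by (auto simp: TA_def xpow_def)

lemma tone_in_TA [simp]: "tone n \<in> TA n"
  by (simp add: tone_def)

lemma tmult_in_TA [simp]: "tmult n a b \<in> TA n"
  by (simp add: TA_def tmult_def)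

lemma tmult_xpow: "tmult n (xpow n i) (xpow n j) = xpow n (i + j)"
proof
  fix k
  show "tmult n (xpow n i) (xpow n j) k = xpow n (i + j) k"
    unfolding tmult_def by (subst sum_eq_single[where a = i]) (auto simp: xpow_def)
qed

lemma tmult_tone_right:
  assumes "a \<in> TA n"
  shows "tmult n a (tone n) = a"
proof
  fix k
  show "tmult n a (tone n) k = a k"
  proof (cases "k < n")
    case True
    then have "(\<Sum>i\<le>k. a i * tone n (k - i)) = a k"
      by (subst sum_eq_single[where a = k]) (auto simp: tone_def xpow_def)
    then show ?thesis
      using True by (simp add: tmult_def)
  qed (use assms in \<open>simp add: tmult_def TA_def\<close>)
qed

lemma tmult_eq_0_below_sum_orders:
  assumes a: "\<forall>i<p. a i = 0" and b: "\<forall>i<q. b i = 0" and "l < p + q"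
  shows "tmult n a b l = 0"
proof -
  have "a i * b (l - i) = 0" if "i \<le> l" for i
  proof (cases "i < p")
    case False
    then have "l - i < q" using \<open>l < p + q\<close> that by linarith
    then show ?thesis using b by simp
  qed (use a in simp)
  then show ?thesis
    unfolding tmult_def by (simp add: sum.neutral)
qed

lemma tmult_at_sum_orders:
  assumes a: "\<forall>i<p. a i = 0" and b: "\<forall>i<q. b i = 0" and "p + q < n"
  shows "tmult n a b (p + q) = a p * b q"
proof -
  have "(\<Sum>i\<le>p + q. a i * b (p + q - i)) = a p * b q"
  proof (subst sum_eq_single[where a = p])
    fix i assume "i \<in> {..p + q}" "i \<noteq> p"
    show "a i * b (p + q - i) = 0"
    proof (cases "i < p")
      case False
      then have "p + q - i < q" using \<open>i \<in> {..p + q}\<close> \<open>i \<noteq> p\<close> by auto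
      then show ?thesis using b by simp
    qed (use a in simp)
  qed auto
  then show ?thesis
    using \<open>p + q < n\<close> by (simp add: tmult_def)
qed

lemma frob_morphism_in_TA: "frob_morphism n f \<Longrightarrow> a \<in> TA n \<Longrightarrow> f a \<in> TA n"
  by (simp add: frob_morphism_def is_linear_map_def)

lemma frob_morphism_tadd:
  "frob_morphism n f \<Longrightarrow> a \<in> TA n \<Longrightarrow> b \<in> TA n \<Longrightarrow> f (tadd a b) = tadd (f a) (f b)"
  by (simp add: frob_morphism_def is_linear_map_def)

lemma frob_morphism_tsmult: "frob_morphism n f \<Longrightarrow> a \<in> TA n \<Longrightarrow> f (tsmult c a) = tsmult c (f a)"
  by (simp add: frob_morphism_def is_linear_map_def)

lemma frob_morphism_tone: "frob_morphism n f \<Longrightarrow> f (tone n) = tone n"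
  by (simp add: frob_morphism_def)

lemma frob_morphism_tmult:
  "frob_morphism n f \<Longrightarrow> a \<in> TA n \<Longrightarrow> b \<in> TA n \<Longrightarrow> f (tmult n a b) = tmult n (f a) (f b)"
  by (simp add: frob_morphism_def)

lemma frob_morphism_counit: "frob_morphism n f \<Longrightarrow> a \<in> TA n \<Longrightarrow> counit n (f a) = counit n a"
  by (simp add: frob_morphism_def)

lemma frob_morphism_zero:
  assumes "frob_morphism n f"
  shows "f (\<lambda>_. 0) = (\<lambda>_. 0)"
proof -
  have "(\<lambda>_. 0) \<in> TA n" by (simp add: TA_def)
  from frob_morphism_tsmult[OF assms this, of 0] show ?thesis
    by (simp add: tsmult_def)
qed

lemma frob_morphism_xpow_Suc:
  assumes "frob_morphism n f"
  shows "f (xpow n (Suc m)) = tmult n (f (xpow n 1)) (f (xpow n m))"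
  using frob_morphism_tmult[OF assms xpow_in_TA xpow_in_TA, of 1 m] by (simp add: tmult_xpow)

text \<open>The constant term of f(x) is an n-th root of the constant term of f(x^n) = 0.\<close>

lemma frob_morphism_x_coeff_0:
  assumes fm: "frob_morphism n f" and "0 < n"
  shows "f (xpow n 1) 0 = 0"
proof -
  have "f (xpow n m) 0 = f (xpow n 1) 0 ^ m" for m
  proof (induction m)
    case 0
    then show ?case
      using frob_morphism_tone[OF fm] \<open>0 < n\<close> by (simp add: tone_def xpow_def)
  next
    case (Suc m)
    then show ?case
      using \<open>0 < n\<close> by (simp add: frob_morphism_xpow_Suc[OF fm, of m] tmult_def)
  qed
  from this[of n] show ?thesis
    using frob_morphism_zero[OF fm] by (simp add: xpow_def)
qed

lemma frob_morphism_xpow_below: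
  assumes fm: "frob_morphism n f" and "0 < n"
  shows "\<forall>i<m. f (xpow n m) i = 0"
proof (induction m)
  case (Suc m)
  have "\<forall>i<1. f (xpow n 1) i = 0"
    using frob_morphism_x_coeff_0[OF assms] by simp
  from tmult_eq_0_below_sum_orders[OF this Suc.IH] show ?case
    by (simp add: frob_morphism_xpow_Suc[OF fm, of m])
qed simp

lemma frob_morphism_xpow_diag:
  assumes fm: "frob_morphism n f" and "0 < n" and "m < n"
  shows "f (xpow n m) m = f (xpow n 1) 1 ^ m"
  using \<open>m < n\<close>
proof (induction m)
  case 0
  then show ?case
    using frob_morphism_tone[OF fm] by (simp add: tone_def xpow_def)
next
  case (Suc m)
  have "\<forall>i<1. f (xpow n 1) i = 0"
    using frob_morphism_x_coeff_0[OF fm \<open>0 < n\<close>] by simp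
  from tmult_at_sum_orders[OF this frob_morphism_xpow_below[OF fm \<open>0 < n\<close>]] Suc
  show ?case
    by (simp add: frob_morphism_xpow_Suc[OF fm, of m])
qed

lemma frob_morphism_expand:
  assumes fm: "frob_morphism n f" and a: "a \<in> TA n"
  shows "f a = (\<lambda>p. \<Sum>i<n. a i * f (xpow n i) p)"
proof -
  define trunc where "trunc m = (\<lambda>j. if j < m then a j else 0)" for m
  have trunc_in_TA: "trunc m \<in> TA n" for m
    using a by (auto simp: trunc_def TA_def)
  have trunc_Suc: "trunc (Suc m) = tadd (trunc m) (tsmult (a m) (xpow n m))" for m
    using a by (auto simp: trunc_def tadd_def tsmult_def xpow_def TA_def fun_eq_iff less_Suc_eq)
  have "f (trunc m) = (\<lambda>p. \<Sum>i<m. a i * f (xpow n i) p)" for m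
  proof (induction m)
    case 0
    then show ?case
      using frob_morphism_zero[OF fm] by (simp add: trunc_def)
  next
    case (Suc m)
    have "tsmult (a m) (xpow n m) \<in> TA n"
      by (auto simp: tsmult_def xpow_def TA_def)
    then have "f (trunc (Suc m)) = tadd (f (trunc m)) (tsmult (a m) (f (xpow n m)))"
      by (simp add: trunc_Suc frob_morphism_tadd[OF fm trunc_in_TA] frob_morphism_tsmult[OF fm])
    then show ?case
      using Suc.IH by (simp add: tadd_def tsmult_def)
  qed
  moreover have "trunc n = a"
    using a by (auto simp: trunc_def TA_def fun_eq_iff)
  ultimately show ?thesis
    by metis
qed

lemma tensor_map_delta1:
  assumes "0 < n"
  shows "tensor_map n f id (delta1 n) p q = (if q < n then f (xpow n (n - 1 - q)) p else 0)"
proof -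
  have inner: "(\<Sum>j<n. delta1 n i j * f (xpow n i) p * id (xpow n j) q)
      = (if q < n \<and> i + q = n - 1 then f (xpow n i) p else 0)" for i
    by (subst sum_eq_single[where a = q]) (auto simp: xpow_def delta1_def)
  have "(\<Sum>i<n. if q < n \<and> i + q = n - 1 then f (xpow n i) p else 0)
      = (if q < n then f (xpow n (n - 1 - q)) p else 0)"
    using assms by (subst sum_eq_single[where a = "n - 1 - q"]) auto
  then show ?thesis
    unfolding tensor_map_def inner .
qed

lemma tensor_mult_eq_antidiagonal_sum:
  "tensor_mult n T k = (if k < n then (\<Sum>i\<le>k. T i (k - i)) else 0)"
proof -
  have inner: "(\<Sum>j<n. T i j * tmult n (xpow n i) (xpow n j) k)
      = (if i \<le> k \<and> k < n then T i (k - i) else 0)" for i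
    unfolding tmult_xpow by (subst sum_eq_single[where a = "k - i"]) (auto simp: xpow_def)
  have "(\<Sum>i<n. if i \<le> k \<and> k < n then T i (k - i) else 0)
      = (if k < n then (\<Sum>i\<le>k. T i (k - i)) else 0)"
  proof (cases "k < n")
    case True
    then show ?thesis
      by (simp, intro sum.mono_neutral_cong_right) auto
  qed simp
  then show ?thesis
    unfolding tensor_mult_def inner .
qed

text \<open>Since f(x^i) has order i, only the top degree survives in m(f \<otimes> id)\<Delta>(1).\<close>

lemma tensor_mult_tensor_map_delta1:
  assumes fm: "frob_morphism n f" and n: "0 < n"
  shows "tensor_mult n (tensor_map n f id (delta1 n))
    = (\<lambda>k. if k = n - 1 then (\<Sum>m<n. f (xpow n 1) 1 ^ m) else 0)"
proof
  fix k
  show "tensor_mult n (tensor_map n f id (delta1 n)) k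
    = (if k = n - 1 then (\<Sum>m<n. f (xpow n 1) 1 ^ m) else 0)"
  proof (cases "k < n")
    case True
    then have eq: "tensor_mult n (tensor_map n f id (delta1 n)) k
        = (\<Sum>i\<le>k. f (xpow n (n - 1 - (k - i))) i)"
      unfolding tensor_mult_eq_antidiagonal_sum tensor_map_delta1[OF n] by (auto intro!: sum.cong)
    show ?thesis
    proof (cases "k = n - 1")
      case True
      then have "{..k} = {..<n}" using n by auto
      with True show ?thesis
        unfolding eq using frob_morphism_xpow_diag[OF fm n] by (auto intro!: sum.cong)
    next
      case False
      then show ?thesis
        unfolding eq using \<open>k < n\<close> frob_morphism_xpow_below[OF fm n] by (auto intro!: sum.neutral)
    qed
  qed (use n in \<open>simp add: tensor_mult_eq_antidiagonal_sum\<close>)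
qed

lemma frob_morphism_coeff_at_order:
  assumes fm: "frob_morphism n f" and n: "0 < n" and c: "f (xpow n 1) 1 = 1"
    and b: "b \<in> TA n" and low: "\<forall>i<m. b i = 0"
  shows "f b m = b m"
proof -
  have "f b m = (\<Sum>i<n. b i * f (xpow n i) m)"
    using frob_morphism_expand[OF fm b] by simp
  also have "\<dots> = (if m < n then b m * f (xpow n m) m else 0)"
  proof (subst sum_eq_single[where a = m])
    fix i assume "i \<noteq> m"
    then show "b i * f (xpow n i) m = 0"
      using low frob_morphism_xpow_below[OF fm n] by (cases "i < m") auto
  qed auto
  also have "\<dots> = b m"
    using b frob_morphism_xpow_diag[OF fm n] c by (auto simp: TA_def)
  finally show ?thesis .
qed

text \<open>If b = f(a) - a then f(b) = -b, while f fixes the lowest nonzero coefficient of b;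
  in characteristic zero this forces b = 0.\<close>

lemma frob_involution_unipotent_eq_id:
  fixes f :: "(nat \<Rightarrow> 'k::field_char_0) \<Rightarrow> nat \<Rightarrow> 'k"
  assumes fm: "frob_morphism n f" and n: "0 < n" and c: "f (xpow n 1) 1 = 1"
    and inv: "\<forall>a\<in>TA n. f (f a) = a" and a: "a \<in> TA n"
  shows "f a = a"
proof (rule ccontr)
  define b where "b = tadd (f a) (tsmult (-1) a)"
  have tsmult_in_TA: "tsmult (-1) a \<in> TA n"
    using a by (simp add: TA_def tsmult_def)
  have b_in_TA: "b \<in> TA n"
    using a frob_morphism_in_TA[OF fm a] by (simp add: b_def TA_def tadd_def tsmult_def)
  have "f b = tadd (f (f a)) (tsmult (-1) (f a))"
    unfolding b_def frob_morphism_tadd[OF fm frob_morphism_in_TA[OF fm a] tsmult_in_TA]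
      frob_morphism_tsmult[OF fm a] ..
  then have fb: "f b = tsmult (-1) b"
    using inv a by (simp add: b_def tadd_def tsmult_def fun_eq_iff)
  assume "f a \<noteq> a"
  then have "\<exists>m. b m \<noteq> 0"
    by (auto simp: b_def tadd_def tsmult_def fun_eq_iff)
  define m where "m = (LEAST m. b m \<noteq> 0)"
  have "b m \<noteq> 0"
    unfolding m_def using \<open>\<exists>m. b m \<noteq> 0\<close> by (rule LeastI_ex)
  have "\<forall>i<m. b i = 0"
    unfolding m_def using not_less_Least by blast
  then have "f b m = b m"
    by (rule frob_morphism_coeff_at_order[OF fm n c b_in_TA])
  then have "- b m = b m"
    by (simp add: fb tsmult_def)
  with \<open>b m \<noteq> 0\<close> show False
    by simp
qed

lemma frob_involution_x_coeff_square:
  assumes fm: "frob_morphism n f" and n: "2 \<le> n" and inv: "f (f (xpow n 1)) = xpow n 1"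
  shows "f (xpow n 1) 1 * f (xpow n 1) 1 = 1"
proof -
  define z where "z = f (xpow n 1)"
  have "0 < n" using n by simp
  have "f z 1 = (\<Sum>i<n. z i * f (xpow n i) 1)"
    using frob_morphism_expand[OF fm frob_morphism_in_TA[OF fm xpow_in_TA]] by (simp add: z_def)
  also have "\<dots> = z 1 * z 1"
  proof (subst sum_eq_single[where a = 1])
    fix i :: nat assume "i \<noteq> 1"
    then consider "i = 0" | "1 < i" by linarith
    then show "z i * f (xpow n i) 1 = 0"
      by cases (use frob_morphism_x_coeff_0[OF fm \<open>0 < n\<close>]
          frob_morphism_xpow_below[OF fm \<open>0 < n\<close>] in \<open>auto simp: z_def\<close>)
  qed (use n in \<open>auto simp: z_def\<close>)
  finally show ?thesis
    using inv n by (simp add: z_def xpow_def)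
qed

lemma frob_morphism_x_coeff_pow:
  assumes fm: "frob_morphism n f" and n: "0 < n"
  shows "f (xpow n 1) 1 ^ (n - 1) = 1"
  using frob_morphism_counit[OF fm xpow_in_TA, of "n - 1"] frob_morphism_xpow_diag[OF fm n, of "n - 1"] n
  by (simp add: counit_def xpow_def)

lemma sum_powers_of_sign_neq_0:
  fixes c :: "'k::field_char_0"
  assumes "c * c = 1" and "c ^ (n - 1) = 1" and "0 < n"
  shows "(\<Sum>m<n. c ^ m) \<noteq> 0"
proof -
  consider "c = 1" | "c = -1"
    using \<open>c * c = 1\<close> by (auto simp: square_eq_1_iff)
  then show ?thesis
  proof cases
    case 2
    have "even (n - 1)"
    proof (rule ccontr)
      assume "odd (n - 1)"
      with 2 \<open>c ^ (n - 1) = 1\<close> have "(-1::'k) = 1" by simp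
      then show False by simp
    qed
    have "(\<Sum>m<k. (-1::'k) ^ m) = (if even k then 0 else 1)" for k
      by (induction k) auto
    with 2 \<open>even (n - 1)\<close> \<open>0 < n\<close> show ?thesis
      by (cases n) auto
  qed (use \<open>0 < n\<close> in simp)
qed

lemma tmult_self_vanishing_below:
  assumes sq: "\<forall>l<N. tmult n a a l = 0" and "N \<le> n" and "2 * j < N"
  shows "a j = 0"
  using \<open>2 * j < N\<close>
proof (induction j rule: less_induct)
  case (less j)
  then have "\<forall>i<j. a i = 0" by simp
  with less.prems \<open>N \<le> n\<close> have "tmult n a a (j + j) = a j * a j"
    by (intro tmult_at_sum_orders) auto
  with sq less.prems show ?case
    by simp
qed

lemma tmult_self_eq_top_monomial:
  assumes sq: "tmult n a a = (\<lambda>l. if l = n - 1 then s else 0)" and "s \<noteq> 0" and "0 < n"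
  shows "odd n" and "\<forall>j<(n - 1) div 2. a j = 0" and "a ((n - 1) div 2) ^ 2 = s"
proof -
  have vanish: "a j = 0" if "2 * j < n - 1" for j
    using sq that by (intro tmult_self_vanishing_below[of "n - 1" n]) auto
  show "odd n"
  proof
    assume "even n"
    then obtain m where m: "n = 2 * m" by blast
    with vanish have "\<forall>i<m. a i = 0" by auto
    with m \<open>0 < n\<close> have "tmult n a a (n - 1) = 0"
      by (intro tmult_eq_0_below_sum_orders) auto
    with sq \<open>s \<noteq> 0\<close> show False
      by simp
  qed
  then have k: "(n - 1) div 2 + (n - 1) div 2 = n - 1"
    by presburger
  with vanish show low: "\<forall>j<(n - 1) div 2. a j = 0"
    by auto
  from k \<open>0 < n\<close> have "tmult n a a (n - 1) = a ((n - 1) div 2) * a ((n - 1) div 2)"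
    using tmult_at_sum_orders[OF low low, of n] by simp
  with sq show "a ((n - 1) div 2) ^ 2 = s"
    by (simp add: power2_eq_square)
qed

lemma frob_morphism_fixing_multiples_x_coeff:
  assumes fm: "frob_morphism n f" and \<theta>: "\<theta> \<in> TA n"
    and fixed: "\<forall>a\<in>TA n. f (tmult n \<theta> a) = tmult n \<theta> a"
    and low: "\<forall>j<k. \<theta> j = 0" and "\<theta> k \<noteq> 0" and "k + 1 < n"
  shows "f (xpow n 1) 1 = 1"
proof -
  have "f \<theta> = \<theta>"
    using fixed tmult_tone_right[OF \<theta>] by (metis tone_in_TA)
  then have "tmult n \<theta> (f (xpow n 1)) = tmult n \<theta> (xpow n 1)"
    using fixed frob_morphism_tmult[OF fm \<theta> xpow_in_TA] by (metis xpow_in_TA)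
  moreover have "tmult n \<theta> (f (xpow n 1)) (k + 1) = \<theta> k * f (xpow n 1) 1"
    using frob_morphism_x_coeff_0[OF fm] \<open>k + 1 < n\<close> by (intro tmult_at_sum_orders[OF low]) auto
  moreover have "tmult n \<theta> (xpow n 1) (k + 1) = \<theta> k * xpow n 1 1"
    using \<open>k + 1 < n\<close> by (intro tmult_at_sum_orders[OF low]) (auto simp: xpow_def)
  ultimately have "\<theta> k * f (xpow n 1) 1 = \<theta> k * xpow n 1 1"
    by simp
  with \<open>\<theta> k \<noteq> 0\<close> \<open>k + 1 < n\<close> show ?thesis
    by (simp add: xpow_def)
qed

lemma extended_structure_imp:
  fixes \<theta> :: "nat \<Rightarrow> 'k::field_char_0"
  assumes es: "extended_structure n \<phi> \<theta>" and n: "2 \<le> n"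
  shows "odd n \<and> (\<forall>a\<in>TA n. \<phi> a = a) \<and> \<theta> ((n - 1) div 2) ^ 2 = of_nat n
    \<and> (\<forall>j<(n - 1) div 2. \<theta> j = 0)"
proof -
  have \<theta>: "\<theta> \<in> TA n" and fm: "frob_morphism n \<phi>" and inv: "\<forall>a\<in>TA n. \<phi> (\<phi> a) = a"
    and fixed: "\<forall>a\<in>TA n. \<phi> (tmult n \<theta> a) = tmult n \<theta> a"
    and sq: "tensor_mult n (tensor_map n \<phi> id (delta1 n)) = tmult n \<theta> \<theta>"
    using es unfolding extended_structure_def by auto
  have "0 < n" using n by simp
  define c where "c = \<phi> (xpow n 1) 1"
  define s where "s = (\<Sum>m<n. c ^ m)"
  have "s \<noteq> 0"
    unfolding s_def c_def using inv frob_involution_x_coeff_square[OF fm n]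
      frob_morphism_x_coeff_pow[OF fm \<open>0 < n\<close>] \<open>0 < n\<close>
    by (intro sum_powers_of_sign_neq_0) auto
  moreover have "tmult n \<theta> \<theta> = (\<lambda>l. if l = n - 1 then s else 0)"
    using tensor_mult_tensor_map_delta1[OF fm \<open>0 < n\<close>] by (simp only: sq s_def c_def)
  ultimately have odd: "odd n" and low: "\<forall>j<(n - 1) div 2. \<theta> j = 0"
    and top: "\<theta> ((n - 1) div 2) ^ 2 = s"
    using tmult_self_eq_top_monomial[OF _ _ \<open>0 < n\<close>] by blast+
  have "(n - 1) div 2 + 1 < n"
    using odd n by presburger
  with \<open>s \<noteq> 0\<close> top have "c = 1"
    unfolding c_def by (intro frob_morphism_fixing_multiples_x_coeff[OF fm \<theta> fixed low]) auto
  then show ?thesis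
    using odd low top frob_involution_unipotent_eq_id[OF fm \<open>0 < n\<close> _ inv]
    by (simp add: s_def c_def)
qed

lemma frob_morphism_id_on_TA:
  assumes id: "\<forall>a\<in>TA n. \<phi> a = a"
  shows "frob_morphism n \<phi>"
proof -
  have "tensor_map n \<phi> \<phi> (comult n a) = comult n a" for a
  proof (intro ext)
    fix p q
    have \<phi>_xpow: "\<phi> (xpow n i) = xpow n i" for i
      using id by simp
    have "(\<Sum>j<n. comult n a i j * \<phi> (xpow n i) p * \<phi> (xpow n j) q)
        = (if i = p \<and> q < n then comult n a p q else 0)" for i
      unfolding \<phi>_xpow
      by (subst sum_eq_single[where a = q]) (auto simp: xpow_def comult_def lact_def)
    then have "tensor_map n \<phi> \<phi> (comult n a) p q
        = (\<Sum>i<n. if i = p \<and> q < n then comult n a p q else 0)"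
      unfolding tensor_map_def by simp
    also have "\<dots> = comult n a p q"
      by (subst sum_eq_single[where a = p]) (auto simp: comult_def lact_def delta1_def)
    finally show "tensor_map n \<phi> \<phi> (comult n a) p q = comult n a p q" .
  qed
  moreover have "tadd a b \<in> TA n" "tsmult c a \<in> TA n" if "a \<in> TA n" "b \<in> TA n" for a b and c :: 'a
    using that by (simp_all add: TA_def tadd_def tsmult_def)
  ultimately show ?thesis
    using id by (simp add: frob_morphism_def is_linear_map_def)
qed

lemma extended_structureI:
  fixes \<theta> :: "nat \<Rightarrow> 'k::field_char_0"
  assumes "odd n" and id: "\<forall>a\<in>TA n. \<phi> a = a" and \<theta>: "\<theta> \<in> TA n"
    and top: "\<theta> ((n - 1) div 2) ^ 2 = of_nat n" and low: "\<forall>j<(n - 1) div 2. \<theta> j = 0"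
  shows "extended_structure n \<phi> \<theta>"
proof -
  have "0 < n" using \<open>odd n\<close> by (simp add: odd_pos)
  have fm: "frob_morphism n \<phi>"
    using id by (rule frob_morphism_id_on_TA)
  have k: "(n - 1) div 2 + (n - 1) div 2 = n - 1"
    using \<open>odd n\<close> by presburger
  have "tmult n \<theta> \<theta> l = (if l = n - 1 then of_nat n else 0)" for l
  proof -
    consider "l < n - 1" | "l = n - 1" | "n \<le> l" by linarith
    then show ?thesis
    proof cases
      case 1
      with k show ?thesis by (simp add: tmult_eq_0_below_sum_orders[OF low low])
    next
      case 2
      with k \<open>0 < n\<close> top show ?thesis
        using tmult_at_sum_orders[OF low low, of n] by (simp add: power2_eq_square)
    qed (use \<open>0 < n\<close> in \<open>simp add: tmult_def\<close>)
  qed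
  moreover have "(\<Sum>m<n. \<phi> (xpow n 1) 1 ^ m) = of_nat n"
    using id[rule_format, OF xpow_in_TA, of 1] \<open>0 < n\<close> by (cases "n = 1") (auto simp: xpow_def)
  ultimately have "tensor_mult n (tensor_map n \<phi> id (delta1 n)) = tmult n \<theta> \<theta>"
    using tensor_mult_tensor_map_delta1[OF fm \<open>0 < n\<close>] by auto
  with id fm \<theta> show ?thesis
    by (simp add: extended_structure_def)
qed

theorem mainTheorem4:
  fixes n :: nat
  assumes "alg_closed TYPE('k::field_char_0)" and "n \<ge> 2"
  shows "(even n \<longrightarrow> \<not> (\<exists>\<phi> (\<theta>::nat \<Rightarrow> 'k). extended_structure n \<phi> \<theta>))
       \<and> (odd n \<longrightarrow> (\<forall>\<phi> (\<theta>::nat \<Rightarrow> 'k). extended_structure n \<phi> \<theta> \<longleftrightarrow>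
             ((\<forall>a\<in>TA n. \<phi> a = a) \<and> \<theta> \<in> TA n
              \<and> \<theta> ((n - 1) div 2) ^ 2 = of_nat n
              \<and> (\<forall>j<(n - 1) div 2. \<theta> j = 0))))"
proof (intro conjI impI)
  show "\<not> (\<exists>\<phi> (\<theta>::nat \<Rightarrow> 'k). extended_structure n \<phi> \<theta>)" if "even n"
    using that extended_structure_imp[OF _ \<open>n \<ge> 2\<close>] by blast
next
  assume "odd n"
  show "\<forall>\<phi> (\<theta>::nat \<Rightarrow> 'k). extended_structure n \<phi> \<theta> \<longleftrightarrow>
      ((\<forall>a\<in>TA n. \<phi> a = a) \<and> \<theta> \<in> TA n \<and> \<theta> ((n - 1) div 2) ^ 2 = of_nat n
        \<and> (\<forall>j<(n - 1) div 2. \<theta> j = 0))"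
  proof (intro allI iffI)
    fix \<phi> and \<theta> :: "nat \<Rightarrow> 'k"
    assume es: "extended_structure n \<phi> \<theta>"
    then have "\<theta> \<in> TA n"
      by (simp add: extended_structure_def)
    with extended_structure_imp[OF es \<open>n \<ge> 2\<close>]
    show "(\<forall>a\<in>TA n. \<phi> a = a) \<and> \<theta> \<in> TA n \<and> \<theta> ((n - 1) div 2) ^ 2 = of_nat n
        \<and> (\<forall>j<(n - 1) div 2. \<theta> j = 0)"
      by blast
  qed (use extended_structureI \<open>odd n\<close> in blast)
qed
end
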